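(* Let $N\ge2$, $n\ge1$, $\tilde J>0$ and $J_i=\tilde J/N^i$ for $1\le i\le n$, and let $0\le m\le n-1$, $1\le s\le N$ be integers. Then the sequence $\{\mathcal H(h^{(m,s)};\gamma_i)\}_{i=0}^{sN^m}$ is symmetric, i.e. $$\mathcal H\big(h^{(m,s)};\gamma_K\big)=\mathcal H\big(h^{(m,s)};\gamma_{sN^m-K}\big)\qquad\text{for all }0\le K\le sN^m.$$
   Context: Hierarchical lattice $\Lambda_N^n=\{1,\dots,N^n\}$; $k$-blocks are $\{jN^k+1,\dots,(j+1)N^k\}$; $d(a,b)$ is the smallest $k\ge0$ with $a,b$ in a common $k$-block. For a field $h$, $\mathcal H(h;\sigma)=-\frac12\sum_{\{v,w\},v\ne w}J_{d(v,w)}\sigma(v)\sigma(w)-\frac h2\sum_v\sigma(v)$ (unordered pairs). $\gamma_k$ is the configuration with $+1$ exactly on $\{1,\dots,k\}$ ($0\le k\le N^n$). $h^{(m,s)}=\tilde J\big[(1-\frac1N)(n-m)-(s-1)\frac1N\big]$. *)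

theory Defs
  imports Complex_Main
begin

text \<open>Hierarchical lattice: sites 1..N^n. The j-th k-block is {j N^k + 1 .. (j+1) N^k},
  so sites a, b lie in a common k-block iff (a-1) div N^k = (b-1) div N^k.\<close>

definition hdist :: "nat \<Rightarrow> nat \<Rightarrow> nat \<Rightarrow> nat" where
  "hdist N a b = (LEAST k. (a - 1) div N ^ k = (b - 1) div N ^ k)"

text \<open>Hamiltonian with coupling sequence J, field h, configuration sigma;
  the pair sum runs over unordered pairs {v,w}, v \<noteq> w, realised as v < w.\<close>

definition hamiltonian ::
  "nat \<Rightarrow> nat \<Rightarrow> (nat \<Rightarrow> real) \<Rightarrow> real \<Rightarrow> (nat \<Rightarrow> real) \<Rightarrow> real" where
  "hamiltonian N n J h \<sigma> =
     - (1/2) * (\<Sum>(v,w)\<in>{(v,w). v \<in> {1..N^n} \<and> w \<in> {1..N^n} \<and> v < w}.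
                   J (hdist N v w) * \<sigma> v * \<sigma> w)
     - (h / 2) * (\<Sum>v\<in>{1..N^n}. \<sigma> v)"

definition gamma :: "nat \<Rightarrow> nat \<Rightarrow> real" where
  "gamma k = (\<lambda>v. if v \<le> k then 1 else -1)"

definition hfield :: "nat \<Rightarrow> nat \<Rightarrow> real \<Rightarrow> nat \<Rightarrow> nat \<Rightarrow> real" where
  "hfield N n Jt m s = Jt * ((1 - 1 / real N) * (real n - real m) - (real s - 1) * (1 / real N))"

end

theory Submission
  imports Defs
begin

text \<open>
  For the step configuration \<open>\<gamma>\<^sub>k\<close> the pair energy is a constant minus twice the cut energy,
  the sum of \<open>J(d(v,w))\<close> over the pairs \<open>v \<le> k < w\<close>. Writing each coupling as the telescoping
  sum of the jumps \<open>J\<^sub>j - J\<^sub>j\<^sub>+\<^sub>1\<close> over the scales \<open>j \<ge> d(v,w)\<close>, the cut energy becomes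
  \<open>\<Sum>\<^sub>j (J\<^sub>j - J\<^sub>j\<^sub>+\<^sub>1) r (N\<^sup>j - r)\<close> with \<open>r = k mod N\<^sup>j\<close>: this counts the pairs inside one
  \<open>j\<close>-block separated by the cut. Under \<open>K \<mapsto> L - K\<close> with \<open>L = s N\<^sup>m\<close>, the scales \<open>j \<le> m\<close>
  do not change because \<open>N\<^sup>j\<close> divides \<open>L\<close>, while for \<open>j > m\<close> the segment \<open>{1..L}\<close> lies in a
  single block, so the cut energy changes by \<open>(2K - L) \<Sum>\<^sub>j\<^sub>>\<^sub>m (J\<^sub>j - J\<^sub>j\<^sub>+\<^sub>1)(N\<^sup>j - L)\<close>.
  For geometric couplings that sum is exactly the field \<open>h\<^sup>(\<^sup>m\<^sup>,\<^sup>s\<^sup>)\<close>, and the change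
  \<open>-h (2K - L)\<close> of the field energy cancels it.
\<close>

definition in_common_block :: "nat \<Rightarrow> nat \<Rightarrow> nat \<Rightarrow> nat \<Rightarrow> bool" where
  "in_common_block N k v w \<longleftrightarrow> (v - 1) div N ^ k = (w - 1) div N ^ k"

lemma in_common_block_mono:
  assumes "in_common_block N k v w" "k \<le> k'"
  shows "in_common_block N k' v w"
proof -
  have "N ^ k' = N ^ k * N ^ (k' - k)"
    using assms(2) by (simp flip: power_add)
  then show ?thesis
    using assms(1) by (simp add: in_common_block_def div_mult2_eq)
qed

lemma in_common_block_top:
  assumes "v \<in> {1..N ^ n}" "w \<in> {1..N ^ n}"
  shows "in_common_block N n v w"
proof -
  have "v - 1 < N ^ n" "w - 1 < N ^ n"
    using assms by auto
  then show ?thesis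
    by (simp add: in_common_block_def div_less)
qed

lemma hdist_le_iff:
  assumes "in_common_block N n v w"
  shows "hdist N v w \<le> k \<longleftrightarrow> in_common_block N k v w"
proof -
  have hdist: "hdist N v w = (LEAST k. in_common_block N k v w)"
    by (simp add: hdist_def in_common_block_def)
  show ?thesis
    unfolding hdist
    using in_common_block_mono[OF LeastI[of "\<lambda>k. in_common_block N k v w", OF assms]]
      Least_le[of "\<lambda>k. in_common_block N k v w"]
    by (meson order.trans)
qed

lemma hdist_bounds:
  assumes "v \<in> {1..N ^ n}" "w \<in> {1..N ^ n}" "v \<noteq> w"
  shows "1 \<le> hdist N v w" "hdist N v w \<le> n"
  using hdist_le_iff[OF in_common_block_top[OF assms(1,2)], of 0]
    hdist_le_iff[OF in_common_block_top[OF assms(1,2)], of n] assms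
  by (auto simp: in_common_block_def)

definition coupling_jump :: "nat \<Rightarrow> (nat \<Rightarrow> real) \<Rightarrow> nat \<Rightarrow> real" where
  "coupling_jump n J k = (if k < n then J k - J (Suc k) else J n)"

lemma sum_coupling_jump:
  "d \<le> n \<Longrightarrow> (\<Sum>k = d..n. coupling_jump n J k) = J d"
proof (induction d rule: inc_induct)
  case base
  then show ?case by (simp add: coupling_jump_def)
next
  case (step k)
  then show ?case by (simp add: sum.atLeast_Suc_atMost coupling_jump_def)
qed

lemma coupling_eq_sum_common_blocks:
  assumes "v \<in> {1..N ^ n}" "w \<in> {1..N ^ n}" "v \<noteq> w"
  shows "J (hdist N v w) = (\<Sum>k = 1..n. coupling_jump n J k * of_bool (in_common_block N k v w))"
proof -
  let ?d = "hdist N v w"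
  have "(\<Sum>k = 1..n. coupling_jump n J k * of_bool (in_common_block N k v w))
      = (\<Sum>k \<in> {1..n}. if k \<in> {?d..n} then coupling_jump n J k else 0)"
    by (intro sum.cong) (auto simp: hdist_le_iff[OF in_common_block_top[OF assms(1,2)]])
  also have "\<dots> = (\<Sum>k \<in> {1..n} \<inter> {?d..n}. coupling_jump n J k)"
    by (rule sum.inter_restrict[symmetric]) simp
  also have "{1..n} \<inter> {?d..n} = {?d..n}"
    using hdist_bounds[OF assms] by auto
  finally show ?thesis
    using sum_coupling_jump[OF hdist_bounds(2)[OF assms]] by simp
qed

lemma same_block_across_iff:
  fixes B k v w :: nat
  assumes "B > 0" "1 \<le> v" "v \<le> k" "k < w"
  shows "(v - 1) div B = (w - 1) div B \<longleftrightarrow> k div B * B < v \<and> w \<le> Suc (k div B) * B"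
proof -
  have "(v - 1) div B \<le> k div B" "k div B \<le> (w - 1) div B"
    using assms by (auto intro: div_le_mono)
  then have "(v - 1) div B = (w - 1) div B \<longleftrightarrow> k div B \<le> (v - 1) div B \<and> (w - 1) div B < Suc (k div B)"
    by linarith
  also have "\<dots> \<longleftrightarrow> k div B * B < v \<and> w \<le> Suc (k div B) * B"
    using assms by (auto simp: less_eq_div_iff_mult_less_eq div_less_iff_less_mult)
  finally show ?thesis .
qed

lemma block_pairs_across_eq:
  fixes B M k :: nat
  assumes "B > 0" "B dvd M" "k \<le> M"
  shows "{(v, w). v \<in> {1..M} \<and> w \<in> {1..M} \<and> v < w \<and> (v - 1) div B = (w - 1) div B \<and> v \<le> k \<and> k < w}
       = {k div B * B + 1..k} \<times> {k + 1..Suc (k div B) * B}" (is "?lhs = ?rhs")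
proof (intro set_eqI iffI)
  fix p assume "p \<in> ?lhs"
  then show "p \<in> ?rhs"
    using same_block_across_iff[OF assms(1)] by auto
next
  fix p assume p: "p \<in> ?rhs"
  obtain t where t: "M = t * B"
    using assms(2) by (metis dvdE mult.commute)
  from p have "k div B * B < k"
    by auto
  then have "k div B * B < t * B"
    using assms(3) t by linarith
  then have "Suc (k div B) * B \<le> M"
    using t by (simp del: mult_Suc)
  then show "p \<in> ?lhs"
    using p same_block_across_iff[OF assms(1)] by auto
qed

lemma card_block_pairs_across:
  fixes B M k :: nat
  assumes "B > 0" "B dvd M" "k \<le> M"
  shows "card {(v, w). v \<in> {1..M} \<and> w \<in> {1..M} \<and> v < w \<and> (v - 1) div B = (w - 1) div B \<and> v \<le> k \<and> k < w}
       = k mod B * (B - k mod B)"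
proof -
  have "card {k div B * B + 1..k} = k mod B"
    by (simp add: minus_div_mult_eq_mod)
  moreover have "card {k + 1..Suc (k div B) * B} = B - k mod B"
    by (simp add: modulo_nat_def)
  ultimately show ?thesis
    unfolding block_pairs_across_eq[OF assms] card_cartesian_product by simp
qed

definition lattice_pairs :: "nat \<Rightarrow> nat \<Rightarrow> (nat \<times> nat) set" where
  "lattice_pairs N n = {(v, w). v \<in> {1..N ^ n} \<and> w \<in> {1..N ^ n} \<and> v < w}"

lemma finite_lattice_pairs: "finite (lattice_pairs N n)"
  by (rule finite_subset[of _ "{1..N ^ n} \<times> {1..N ^ n}"]) (auto simp: lattice_pairs_def)

definition cut_energy :: "nat \<Rightarrow> nat \<Rightarrow> (nat \<Rightarrow> real) \<Rightarrow> nat \<Rightarrow> real" where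
  "cut_energy N n J k = (\<Sum>(v, w) \<in> lattice_pairs N n. J (hdist N v w) * of_bool (v \<le> k \<and> k < w))"

definition block_cut :: "nat \<Rightarrow> nat \<Rightarrow> real" where
  "block_cut B k = real (k mod B) * (real B - real (k mod B))"

lemma sum_cut_pairs_in_common_block:
  assumes "N > 0" "k \<le> N ^ n" "j \<le> n"
  shows "(\<Sum>(v, w) \<in> lattice_pairs N n. of_bool (in_common_block N j v w \<and> v \<le> k \<and> k < w)) = block_cut (N ^ j) k"
proof -
  have "0 < N ^ j" "N ^ j dvd N ^ n"
    using assms by (simp_all add: le_imp_power_dvd)
  moreover have "lattice_pairs N n \<inter> {(v, w). in_common_block N j v w \<and> v \<le> k \<and> k < w}
    = {(v, w). v \<in> {1..N ^ n} \<and> w \<in> {1..N ^ n} \<and> v < w \<and> (v - 1) div N ^ j = (w - 1) div N ^ j \<and> v \<le> k \<and> k < w}"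
    by (auto simp: lattice_pairs_def in_common_block_def)
  ultimately show ?thesis
    using card_block_pairs_across[of "N ^ j" "N ^ n" k] assms(2) finite_lattice_pairs[of N n]
    by (simp add: block_cut_def case_prod_unfold of_nat_diff less_imp_le)
qed

lemma cut_energy_eq_sum_block_cut:
  assumes "N > 0" "k \<le> N ^ n"
  shows "cut_energy N n J k = (\<Sum>j = 1..n. coupling_jump n J j * block_cut (N ^ j) k)"
proof -
  have "cut_energy N n J k = (\<Sum>(v, w) \<in> lattice_pairs N n. \<Sum>j = 1..n.
      coupling_jump n J j * of_bool (in_common_block N j v w \<and> v \<le> k \<and> k < w))"
    unfolding cut_energy_def
  proof (intro sum.cong refl, clarify)
    fix v w assume "(v, w) \<in> lattice_pairs N n"
    then have "v \<in> {1..N ^ n}" "w \<in> {1..N ^ n}" "v \<noteq> w"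
      by (auto simp: lattice_pairs_def)
    then show "J (hdist N v w) * of_bool (v \<le> k \<and> k < w) = (\<Sum>j = 1..n.
        coupling_jump n J j * of_bool (in_common_block N j v w \<and> v \<le> k \<and> k < w))"
      by (simp add: coupling_eq_sum_common_blocks[of v N n w J] sum_distrib_right mult.assoc
          of_bool_conj del: sum_of_bool_eq)
  qed
  also have "\<dots> = (\<Sum>j = 1..n. coupling_jump n J j * (\<Sum>(v, w) \<in> lattice_pairs N n.
      of_bool (in_common_block N j v w \<and> v \<le> k \<and> k < w)))"
    by (simp add: sum.swap[of _ "lattice_pairs N n"] sum_distrib_left case_prod_unfold
        del: sum_of_bool_eq)
  finally show ?thesis
    using sum_cut_pairs_in_common_block[OF assms] by simp
qed

lemma hamiltonian_gamma:
  assumes "k \<le> N ^ n"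
  shows "hamiltonian N n J h (gamma k)
       = - (1/2) * (\<Sum>(v, w) \<in> lattice_pairs N n. J (hdist N v w)) + cut_energy N n J k
         - h * real k + h * real (N ^ n) / 2"
proof -
  have "(\<Sum>(v, w) \<in> lattice_pairs N n. J (hdist N v w) * gamma k v * gamma k w)
      = (\<Sum>(v, w) \<in> lattice_pairs N n. J (hdist N v w) - 2 * (J (hdist N v w) * of_bool (v \<le> k \<and> k < w)))"
    by (intro sum.cong refl) (auto simp: lattice_pairs_def gamma_def)
  also have "\<dots> = (\<Sum>(v, w) \<in> lattice_pairs N n. J (hdist N v w)) - 2 * cut_energy N n J k"
    by (simp add: cut_energy_def case_prod_unfold sum_subtractf sum_distrib_left)
  finally have pairs: "(\<Sum>(v, w) \<in> lattice_pairs N n. J (hdist N v w) * gamma k v * gamma k w)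
      = (\<Sum>(v, w) \<in> lattice_pairs N n. J (hdist N v w)) - 2 * cut_energy N n J k" .
  have "(\<Sum>v = 1..N ^ n. gamma k v) = (\<Sum>v = 1..N ^ n. 2 * of_bool (v \<le> k) - 1)"
    by (intro sum.cong) (auto simp: gamma_def)
  also have "\<dots> = 2 * real (card ({1..N ^ n} \<inter> {v. v \<le> k})) - real (N ^ n)"
    by (simp add: sum_subtractf flip: sum_distrib_left)
  also have "{1..N ^ n} \<inter> {v. v \<le> k} = {1..k}"
    using assms by auto
  finally have sites: "(\<Sum>v = 1..N ^ n. gamma k v) = 2 * real k - real (N ^ n)"
    by simp
  show ?thesis
    unfolding hamiltonian_def lattice_pairs_def[symmetric] pairs sites
    by (simp add: algebra_simps)
qed

lemma block_cut_reflect: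
  assumes "B dvd L" "K \<le> L"
  shows "block_cut B (L - K) = block_cut B K"
proof (cases "B = 0")
  case False
  have "int ((L - K) mod B) = (- int K) mod int B"
    using assms by (simp add: of_nat_diff zmod_int mod_diff_left_eq[symmetric])
  then have "(L - K) mod B = (if K mod B = 0 then 0 else B - K mod B)"
    by (simp add: zmod_zminus1_eq_if zmod_int[symmetric] of_nat_diff split: if_splits)
  then show ?thesis
    using False by (simp add: block_cut_def of_nat_diff)
qed (use assms in \<open>simp add: block_cut_def\<close>)

lemma block_cut_within_block:
  "K \<le> B \<Longrightarrow> block_cut B K = real K * (real B - real K)"
  by (cases "K = B") (simp_all add: block_cut_def)

lemma cut_energy_reflect_diff:
  assumes "N > 0" "m < n" "N ^ m dvd L" "L \<le> N ^ Suc m" "K \<le> L"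
  shows "cut_energy N n J K - cut_energy N n J (L - K)
       = (2 * real K - real L) * (\<Sum>j = Suc m..n. coupling_jump n J j * (real N ^ j - real L))"
proof -
  have L_le: "L \<le> N ^ j" if "Suc m \<le> j" for j
    using assms(1,4) power_increasing[OF that, of N] by linarith
  have "L \<le> N ^ n"
    using L_le assms(2) by simp
  then have "cut_energy N n J K - cut_energy N n J (L - K)
      = (\<Sum>j = 1..n. coupling_jump n J j * (block_cut (N ^ j) K - block_cut (N ^ j) (L - K)))"
    using assms(1,5) by (simp add: cut_energy_eq_sum_block_cut sum_subtractf right_diff_distrib)
  also have "\<dots> = (\<Sum>j = Suc m..n. coupling_jump n J j * (block_cut (N ^ j) K - block_cut (N ^ j) (L - K)))"
  proof (intro sum.mono_neutral_right ballI)
    fix j assume "j \<in> {1..n} - {Suc m..n}"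
    then have "N ^ j dvd N ^ m"
      by (auto intro: le_imp_power_dvd)
    then have "N ^ j dvd L"
      using assms(3) by (rule dvd_trans)
    then show "coupling_jump n J j * (block_cut (N ^ j) K - block_cut (N ^ j) (L - K)) = 0"
      using block_cut_reflect assms(5) by simp
  qed auto
  also have "\<dots> = (\<Sum>j = Suc m..n. (2 * real K - real L) * (coupling_jump n J j * (real N ^ j - real L)))"
  proof (intro sum.cong refl)
    fix j assume "j \<in> {Suc m..n}"
    then have "K \<le> N ^ j" "L - K \<le> N ^ j"
      using L_le assms(5) by fastforce+
    then show "coupling_jump n J j * (block_cut (N ^ j) K - block_cut (N ^ j) (L - K))
        = (2 * real K - real L) * (coupling_jump n J j * (real N ^ j - real L))"
      using assms(5) by (simp add: block_cut_within_block of_nat_diff algebra_simps)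
  qed
  finally show ?thesis
    by (simp add: sum_distrib_left)
qed

lemma sum_coupling_jump_geometric:
  assumes "N \<ge> 2" "\<And>i. 1 \<le> i \<Longrightarrow> i \<le> n \<Longrightarrow> J i = Jt / real N ^ i" "m < n"
  shows "(\<Sum>j = Suc m..n. coupling_jump n J j * (real N ^ j - real s * real N ^ m)) = hfield N n Jt m s"
proof -
  have N: "real N > 1"
    using assms(1) by simp
  have "coupling_jump n J j * real N ^ j = Jt * (1 - 1 / real N)" if "j \<in> {Suc m..<n}" for j
    using that N by (auto simp: coupling_jump_def assms(2) field_simps)
  then have "(\<Sum>j = Suc m..<n. coupling_jump n J j * real N ^ j) = (\<Sum>j = Suc m..<n. Jt * (1 - 1 / real N))"
    by (rule sum.cong[OF refl])
  moreover have "(\<Sum>j = Suc m..n. coupling_jump n J j * real N ^ j)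
      = (\<Sum>j = Suc m..<n. coupling_jump n J j * real N ^ j) + coupling_jump n J n * real N ^ n"
    using assms(3) by (simp add: atLeastLessThanSuc_atLeastAtMost[symmetric])
  ultimately have powers: "(\<Sum>j = Suc m..n. coupling_jump n J j * real N ^ j)
      = (real n - real m - 1) * (Jt * (1 - 1 / real N)) + Jt"
    using assms(3) N by (simp add: coupling_jump_def assms(2) of_nat_diff)
  have jumps: "(\<Sum>j = Suc m..n. coupling_jump n J j) * real N ^ m = Jt / real N"
    using assms(2)[of "Suc m"] assms(3) N by (simp add: sum_coupling_jump field_simps)
  have "(\<Sum>j = Suc m..n. coupling_jump n J j * (real N ^ j - real s * real N ^ m))
      = (\<Sum>j = Suc m..n. coupling_jump n J j * real N ^ j)
        - real s * ((\<Sum>j = Suc m..n. coupling_jump n J j) * real N ^ m)"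
    by (simp add: right_diff_distrib sum_subtractf sum_distrib_left sum_distrib_right mult_ac)
  also have "\<dots> = hfield N n Jt m s"
    unfolding powers jumps hfield_def using N by (simp add: field_simps)
  finally show ?thesis .
qed

theorem lemma4p4:
  fixes N n m s K :: nat and Jt :: real and J :: "nat \<Rightarrow> real"
  assumes "N \<ge> 2" and "n \<ge> 1" and "Jt > 0"
    and "\<And>i. 1 \<le> i \<Longrightarrow> i \<le> n \<Longrightarrow> J i = Jt / real N ^ i"
    and "m \<le> n - 1" and "1 \<le> s" and "s \<le> N"
    and "K \<le> s * N ^ m"
  shows "hamiltonian N n J (hfield N n Jt m s) (gamma K)
       = hamiltonian N n J (hfield N n Jt m s) (gamma (s * N ^ m - K))"
proof -
  define L where "L = s * N ^ m"
  have "m < n"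
    using assms(2,5) by simp
  have "L \<le> N ^ Suc m"
    using assms(7) by (simp add: L_def)
  also have "\<dots> \<le> N ^ n"
    using assms(1) \<open>m < n\<close> by (intro power_increasing) simp_all
  finally have "L \<le> N ^ n" .
  have "cut_energy N n J K - cut_energy N n J (L - K) = (2 * real K - real L) * hfield N n Jt m s"
    using cut_energy_reflect_diff[of N m n L K J] sum_coupling_jump_geometric[OF assms(1,4) \<open>m < n\<close>]
      assms(1,7,8) \<open>m < n\<close>
    by (simp add: L_def)
  then show ?thesis
    using \<open>L \<le> N ^ n\<close> assms(8)
    by (simp add: hamiltonian_gamma flip: L_def) (simp add: of_nat_diff algebra_simps)
qed

end
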